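(* Let $K$ be a finite field, $\kappa$ an infinite cardinal, $(R_\alpha\mid\alpha<\kappa)$ a sequence of $K$-algebras, $P=\prod_{\alpha<\kappa}R_\alpha$ and $I=\bigoplus_{\alpha<\kappa}R_\alpha\subseteq P$. Let $R$ be a subring of $P$ with $1_R=1_P$, containing $I$ as an ideal, such that there is a ring isomorphism $\varphi:R/I\cong K$. Then $R$ is a semidirect product of $I$ and $K$, i.e., there exist ring homomorphisms $\pi:R\to K$ surjective with $\mathrm{Ker}\,\pi=I$ and $\nu:K\to R$ with $\pi\nu=\mathrm{id}_K$.
   Context: Rings are unital and ring homomorphisms preserve units. *)

theory Defs
  imports "HOL-Algebra.Algebra"
begin

definition k_algebra ::
  "('k, 'a) ring_scheme \<Rightarrow> ('r, 'b) ring_scheme \<Rightarrow> ('k \<Rightarrow> 'r) \<Rightarrow> bool" where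
  "k_algebra K S f \<longleftrightarrow> ring S \<and> f \<in> ring_hom K S \<and>
     (\<forall>k\<in>carrier K. \<forall>x\<in>carrier S. f k \<otimes>\<^bsub>S\<^esub> x = x \<otimes>\<^bsub>S\<^esub> f k)"

definition prod_ring ::
  "'i set \<Rightarrow> ('i \<Rightarrow> ('r, 'b) ring_scheme) \<Rightarrow> ('i \<Rightarrow> 'r) ring" where
  "prod_ring A Rs =
     \<lparr> carrier = (\<Pi>\<^sub>E a\<in>A. carrier (Rs a)),
       Group.monoid.mult = (\<lambda>f g. \<lambda>a\<in>A. f a \<otimes>\<^bsub>Rs a\<^esub> g a),
       Group.monoid.one = (\<lambda>a\<in>A. \<one>\<^bsub>Rs a\<^esub>),
       Ring.ring.zero = (\<lambda>a\<in>A. \<zero>\<^bsub>Rs a\<^esub>),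
       Ring.ring.add = (\<lambda>f g. \<lambda>a\<in>A. f a \<oplus>\<^bsub>Rs a\<^esub> g a) \<rparr>"

definition dsum_set ::
  "'i set \<Rightarrow> ('i \<Rightarrow> ('r, 'b) ring_scheme) \<Rightarrow> ('i \<Rightarrow> 'r) set" where
  "dsum_set A Rs =
     {f \<in> (\<Pi>\<^sub>E a\<in>A. carrier (Rs a)). finite {a \<in> A. f a \<noteq> \<zero>\<^bsub>Rs a\<^esub>}}"

end

theory Submission
  imports Defs
begin

(* Let \<pi> : R \<rightarrow> K be the surjection with kernel I and \<sigma> any set-theoretic section of it.
   Since \<pi> identifies \<sigma>(k + l) with \<sigma> k + \<sigma> l, and similarly for products and 1, these
   elements differ by an element of the direct sum, i.e. in finitely many coordinates only.
   As K is finite, there is a finite set F of coordinates outside of which every coordinate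
   map k \<mapsto> (\<sigma> k)\<^sub>\<alpha> is a ring homomorphism K \<rightarrow> R\<^sub>\<alpha>. Replacing these coordinates on F by
   the structure maps K \<rightarrow> R\<^sub>\<alpha> changes each \<sigma> k only in finitely many places, so the result
   still lies in the fibre of k, and it is a ring homomorphism coordinatewise.
   Only the finiteness of K is used: neither the field structure of K, nor the infinitude of
   the index set, nor the centrality of the structure maps plays a role. *)

lemma (in ideal) a_kernel_rcos: "a_kernel R (R Quot I) ((+>) I) = I"
proof -
  have "I +> x = I \<longleftrightarrow> x \<in> I" if "x \<in> carrier R" for x
    using that rcos_const_imp_mem
      abelian_subgroup.a_rcos_const[OF abelian_subgroupI3[OF is_additive_subgroup is_abelian_group]]
    by blast
  then have "{x \<in> carrier R. I +> x = I} = I"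
    using Icarr by blast
  then show ?thesis
    by (simp add: a_kernel_def' FactRing_def)
qed

lemma a_kernel_comp_ring_iso:
  assumes "ring S" "ring T" "g \<in> ring_iso S T" "f \<in> ring_hom R S"
  shows "a_kernel R T (g \<circ> f) = a_kernel R S f"
proof -
  have g: "g \<in> ring_hom S T" "inj_on g (carrier S)"
    using assms(3) by (auto simp: ring_iso_def bij_betw_def)
  have "g y = \<zero>\<^bsub>T\<^esub> \<longleftrightarrow> y = \<zero>\<^bsub>S\<^esub>" if "y \<in> carrier S" for y
    using that g ring_hom_zero[OF g(1) assms(1,2)] ring.ring_simprules(2)[OF assms(1)]
    by (metis inj_on_eq_iff)
  then show ?thesis
    using ring_hom_closed[OF assms(4)] by (auto simp: a_kernel_def')
qed

lemma quotient_iso_projection: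
  assumes I: "ideal I R" and K: "ring K" and h: "h \<in> ring_iso (R Quot I) K"
  shows "h \<circ> (+>\<^bsub>R\<^esub>) I \<in> ring_hom R K"
    and "(h \<circ> (+>\<^bsub>R\<^esub>) I) ` carrier R = carrier K"
    and "a_kernel R K (h \<circ> (+>\<^bsub>R\<^esub>) I) = I"
proof -
  interpret ideal I R by (rule I)
  have h_hom: "h \<in> ring_hom (R Quot I) K"
    using h by (simp add: ring_iso_def)
  show "h \<circ> (+>\<^bsub>R\<^esub>) I \<in> ring_hom R K"
    using rcos_ring_hom h_hom by (rule ring_hom_trans)
  have "(h \<circ> (+>\<^bsub>R\<^esub>) I) ` carrier R = h ` ((+>\<^bsub>R\<^esub>) I ` carrier R)"
    by (rule image_comp[symmetric])
  also have "(+>\<^bsub>R\<^esub>) I ` carrier R = carrier (R Quot I)"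
    by (auto simp: FactRing_def A_RCOSETS_def')
  also have "h ` carrier (R Quot I) = carrier K"
    using h by (simp add: ring_iso_def bij_betw_def)
  finally show "(h \<circ> (+>\<^bsub>R\<^esub>) I) ` carrier R = carrier K" .
  show "a_kernel R K (h \<circ> (+>\<^bsub>R\<^esub>) I) = I"
    using a_kernel_comp_ring_iso[OF quotient_is_ring K h rcos_ring_hom] a_kernel_rcos by simp
qed

lemma prod_ring_simps:
  "carrier (prod_ring A Rs) = (\<Pi>\<^sub>E a\<in>A. carrier (Rs a))"
  "x \<oplus>\<^bsub>prod_ring A Rs\<^esub> y = (\<lambda>a\<in>A. x a \<oplus>\<^bsub>Rs a\<^esub> y a)"
  "x \<otimes>\<^bsub>prod_ring A Rs\<^esub> y = (\<lambda>a\<in>A. x a \<otimes>\<^bsub>Rs a\<^esub> y a)"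
  "\<one>\<^bsub>prod_ring A Rs\<^esub> = (\<lambda>a\<in>A. \<one>\<^bsub>Rs a\<^esub>)"
  by (simp_all add: prod_ring_def)

lemma ring_hom_prod_ringI:
  assumes K: "ring K"
    and coords: "\<And>a. a \<in> A \<Longrightarrow> (\<lambda>k. g k a) \<in> ring_hom K (Rs a)"
    and into: "\<And>k. k \<in> carrier K \<Longrightarrow> g k \<in> S"
    and S: "S \<subseteq> carrier (prod_ring A Rs)"
  shows "g \<in> ring_hom K ((prod_ring A Rs)\<lparr>carrier := S\<rparr>)"
proof -
  have outside: "g k a = undefined" if "k \<in> carrier K" "a \<notin> A" for k a
    using into[OF that(1)] S that(2) by (auto simp: prod_ring_simps PiE_def extensional_def)
  show ?thesis
  proof (rule ring_hom_memI)
    fix k l assume k: "k \<in> carrier K" and l: "l \<in> carrier K"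
    show "g (k \<otimes>\<^bsub>K\<^esub> l) = g k \<otimes>\<^bsub>(prod_ring A Rs)\<lparr>carrier := S\<rparr>\<^esub> g l"
    proof
      fix a show "g (k \<otimes>\<^bsub>K\<^esub> l) a = (g k \<otimes>\<^bsub>(prod_ring A Rs)\<lparr>carrier := S\<rparr>\<^esub> g l) a"
        using ring_hom_mult[OF coords k l] outside k l K
        by (cases "a \<in> A") (simp_all add: prod_ring_simps ring.ring_simprules)
    qed
    show "g (k \<oplus>\<^bsub>K\<^esub> l) = g k \<oplus>\<^bsub>(prod_ring A Rs)\<lparr>carrier := S\<rparr>\<^esub> g l"
    proof
      fix a show "g (k \<oplus>\<^bsub>K\<^esub> l) a = (g k \<oplus>\<^bsub>(prod_ring A Rs)\<lparr>carrier := S\<rparr>\<^esub> g l) a"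
        using ring_hom_add[OF coords k l] outside k l K
        by (cases "a \<in> A") (simp_all add: prod_ring_simps ring.ring_simprules)
    qed
  next
    show "g \<one>\<^bsub>K\<^esub> = \<one>\<^bsub>(prod_ring A Rs)\<lparr>carrier := S\<rparr>\<^esub>"
    proof
      fix a show "g \<one>\<^bsub>K\<^esub> a = \<one>\<^bsub>(prod_ring A Rs)\<lparr>carrier := S\<rparr>\<^esub> a"
        using ring_hom_one[OF coords] outside K
        by (cases "a \<in> A") (simp_all add: prod_ring_simps ring.ring_simprules)
    qed
  qed (simp add: into)
qed

lemma finite_disagreement_iff_dsum_translate:
  assumes rings: "\<And>a. a \<in> A \<Longrightarrow> ring (Rs a)"
    and x: "x \<in> (\<Pi>\<^sub>E a\<in>A. carrier (Rs a))" and y: "y \<in> (\<Pi>\<^sub>E a\<in>A. carrier (Rs a))"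
  shows "finite {a \<in> A. x a \<noteq> y a} \<longleftrightarrow> (\<exists>d \<in> dsum_set A Rs. y = d \<oplus>\<^bsub>prod_ring A Rs\<^esub> x)"
proof
  assume fin: "finite {a \<in> A. x a \<noteq> y a}"
  define d where "d = (\<lambda>a\<in>A. y a \<ominus>\<^bsub>Rs a\<^esub> x a)"
  have "d \<in> (\<Pi>\<^sub>E a\<in>A. carrier (Rs a))"
  proof (rule PiE_I)
    fix a assume a: "a \<in> A"
    interpret ring "Rs a" using a by (rule rings)
    show "d a \<in> carrier (Rs a)"
      using a PiE_mem[OF x a] PiE_mem[OF y a] by (simp add: d_def)
  qed (simp add: d_def)
  moreover have "{a \<in> A. d a \<noteq> \<zero>\<^bsub>Rs a\<^esub>} \<subseteq> {a \<in> A. x a \<noteq> y a}"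
  proof safe
    fix a assume "a \<in> A" "d a \<noteq> \<zero>\<^bsub>Rs a\<^esub>" "x a = y a"
    then show False
      using ring.r_right_minus_eq[OF rings] PiE_mem[OF y] by (simp add: d_def)
  qed
  ultimately have "d \<in> dsum_set A Rs"
    using fin finite_subset by (auto simp: dsum_set_def)
  moreover have "y = d \<oplus>\<^bsub>prod_ring A Rs\<^esub> x"
  proof
    fix a show "y a = (d \<oplus>\<^bsub>prod_ring A Rs\<^esub> x) a"
    proof (cases "a \<in> A")
      case True
      interpret ring "Rs a" using True by (rule rings)
      show ?thesis
        using True PiE_mem[OF x True] PiE_mem[OF y True]
        by (simp add: prod_ring_simps d_def minus_eq a_assoc l_neg)
    next
      case False
      then show ?thesis
        using PiE_arb[OF y False] by (simp add: prod_ring_simps)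
    qed
  qed
  ultimately show "\<exists>d \<in> dsum_set A Rs. y = d \<oplus>\<^bsub>prod_ring A Rs\<^esub> x"
    by blast
next
  assume "\<exists>d \<in> dsum_set A Rs. y = d \<oplus>\<^bsub>prod_ring A Rs\<^esub> x"
  then obtain d where d: "d \<in> dsum_set A Rs" and y_eq: "y = d \<oplus>\<^bsub>prod_ring A Rs\<^esub> x" ..
  have "{a \<in> A. x a \<noteq> y a} \<subseteq> {a \<in> A. d a \<noteq> \<zero>\<^bsub>Rs a\<^esub>}"
  proof safe
    fix a assume a: "a \<in> A" "x a \<noteq> y a" "d a = \<zero>\<^bsub>Rs a\<^esub>"
    interpret ring "Rs a" using a(1) by (rule rings)
    show False
      using a PiE_mem[OF x a(1)] by (simp add: y_eq prod_ring_simps)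
  qed
  then show "finite {a \<in> A. x a \<noteq> y a}"
    using d finite_subset by (auto simp: dsum_set_def)
qed

locale dsum_kernel_hom =
  fixes A :: "'i set" and Rs :: "'i \<Rightarrow> ('r, 'b) ring_scheme" and S :: "('i \<Rightarrow> 'r) set"
    and K :: "('k, 'c) ring_scheme" and \<pi> :: "('i \<Rightarrow> 'r) \<Rightarrow> 'k"
  assumes rings: "\<And>a. a \<in> A \<Longrightarrow> ring (Rs a)"
    and S_subset: "S \<subseteq> carrier (prod_ring A Rs)"
    and ring_S: "ring ((prod_ring A Rs)\<lparr>carrier := S\<rparr>)"
    and ring_K: "ring K"
    and hom: "\<pi> \<in> ring_hom ((prod_ring A Rs)\<lparr>carrier := S\<rparr>) K"
    and kernel: "a_kernel ((prod_ring A Rs)\<lparr>carrier := S\<rparr>) K \<pi> = dsum_set A Rs"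
begin

lemma same_image_iff_finite_disagreement:
  assumes x: "x \<in> S" and y: "y \<in> carrier (prod_ring A Rs)"
  shows "y \<in> S \<and> \<pi> y = \<pi> x \<longleftrightarrow> finite {a \<in> A. x a \<noteq> y a}"
proof -
  interpret ring_hom_ring "(prod_ring A Rs)\<lparr>carrier := S\<rparr>" K \<pi>
    using ring_S ring_K hom by (rule ring_hom_ringI2)
  have "{y \<in> S. \<pi> y = \<pi> x} = dsum_set A Rs +>\<^bsub>(prod_ring A Rs)\<lparr>carrier := S\<rparr>\<^esub> x"
    using rcos_eq_homeq[of x] x kernel by simp
  also have "\<dots> = {d \<oplus>\<^bsub>prod_ring A Rs\<^esub> x | d. d \<in> dsum_set A Rs}"
    unfolding a_r_coset_def' by simp blast
  finally have "y \<in> S \<and> \<pi> y = \<pi> x \<longleftrightarrow> (\<exists>d \<in> dsum_set A Rs. y = d \<oplus>\<^bsub>prod_ring A Rs\<^esub> x)"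
    by blast
  also have "\<dots> \<longleftrightarrow> finite {a \<in> A. x a \<noteq> y a}"
    using finite_disagreement_iff_dsum_translate[of A Rs x y] rings x y S_subset
    by (simp add: prod_ring_simps subset_iff)
  finally show ?thesis .
qed

lemma finite_disagreement_of_same_image:
  assumes "x \<in> S" "y \<in> S" "\<pi> x = \<pi> y"
  shows "finite {a \<in> A. x a \<noteq> y a}"
proof -
  have "y \<in> carrier (prod_ring A Rs)"
    using assms(2) S_subset by blast
  moreover have "y \<in> S \<and> \<pi> y = \<pi> x"
    using assms by simp
  ultimately show ?thesis
    using same_image_iff_finite_disagreement[OF assms(1)] by blast
qed

lemma finite_section_defects:
  assumes \<sigma>: "\<And>k. k \<in> carrier K \<Longrightarrow> \<sigma> k \<in> S \<and> \<pi> (\<sigma> k) = k"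
    and k: "k \<in> carrier K" and l: "l \<in> carrier K"
  shows "finite {a \<in> A. \<sigma> (k \<oplus>\<^bsub>K\<^esub> l) a \<noteq> (\<sigma> k \<oplus>\<^bsub>prod_ring A Rs\<^esub> \<sigma> l) a}"
    and "finite {a \<in> A. \<sigma> (k \<otimes>\<^bsub>K\<^esub> l) a \<noteq> (\<sigma> k \<otimes>\<^bsub>prod_ring A Rs\<^esub> \<sigma> l) a}"
proof -
  have \<sigma>_kl: "\<sigma> k \<in> S" "\<sigma> l \<in> S" "\<pi> (\<sigma> k) = k" "\<pi> (\<sigma> l) = l"
    using \<sigma> k l by simp_all
  have "\<sigma> (k \<oplus>\<^bsub>K\<^esub> l) \<in> S" "\<pi> (\<sigma> (k \<oplus>\<^bsub>K\<^esub> l)) = k \<oplus>\<^bsub>K\<^esub> l"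
    "\<sigma> (k \<otimes>\<^bsub>K\<^esub> l) \<in> S" "\<pi> (\<sigma> (k \<otimes>\<^bsub>K\<^esub> l)) = k \<otimes>\<^bsub>K\<^esub> l"
    using \<sigma> ring.ring_simprules(1,5)[OF ring_K k l] by simp_all
  moreover have "\<sigma> k \<oplus>\<^bsub>prod_ring A Rs\<^esub> \<sigma> l \<in> S" "\<sigma> k \<otimes>\<^bsub>prod_ring A Rs\<^esub> \<sigma> l \<in> S"
    using ring.ring_simprules(1,5)[OF ring_S, of "\<sigma> k" "\<sigma> l"] \<sigma>_kl by simp_all
  moreover have "\<pi> (\<sigma> k \<oplus>\<^bsub>prod_ring A Rs\<^esub> \<sigma> l) = k \<oplus>\<^bsub>K\<^esub> l"
    "\<pi> (\<sigma> k \<otimes>\<^bsub>prod_ring A Rs\<^esub> \<sigma> l) = k \<otimes>\<^bsub>K\<^esub> l"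
    using ring_hom_add[OF hom, of "\<sigma> k" "\<sigma> l"] ring_hom_mult[OF hom, of "\<sigma> k" "\<sigma> l"] \<sigma>_kl
    by simp_all
  ultimately show "finite {a \<in> A. \<sigma> (k \<oplus>\<^bsub>K\<^esub> l) a \<noteq> (\<sigma> k \<oplus>\<^bsub>prod_ring A Rs\<^esub> \<sigma> l) a}"
    and "finite {a \<in> A. \<sigma> (k \<otimes>\<^bsub>K\<^esub> l) a \<noteq> (\<sigma> k \<otimes>\<^bsub>prod_ring A Rs\<^esub> \<sigma> l) a}"
    by (simp_all add: finite_disagreement_of_same_image)
qed

lemma finite_section_one_defect:
  assumes \<sigma>: "\<And>k. k \<in> carrier K \<Longrightarrow> \<sigma> k \<in> S \<and> \<pi> (\<sigma> k) = k"
  shows "finite {a \<in> A. \<sigma> \<one>\<^bsub>K\<^esub> a \<noteq> \<one>\<^bsub>prod_ring A Rs\<^esub> a}"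
proof (rule finite_disagreement_of_same_image)
  show "\<sigma> \<one>\<^bsub>K\<^esub> \<in> S" "\<one>\<^bsub>prod_ring A Rs\<^esub> \<in> S"
    using \<sigma> ring.ring_simprules(6)[OF ring_K] ring.ring_simprules(6)[OF ring_S] by simp_all
  show "\<pi> (\<sigma> \<one>\<^bsub>K\<^esub>) = \<pi> \<one>\<^bsub>prod_ring A Rs\<^esub>"
    using \<sigma> ring.ring_simprules(6)[OF ring_K] ring_hom_one[OF hom] by simp
qed

lemma finite_non_hom_coordinates:
  assumes K_finite: "finite (carrier K)"
    and \<sigma>: "\<And>k. k \<in> carrier K \<Longrightarrow> \<sigma> k \<in> S \<and> \<pi> (\<sigma> k) = k"
  shows "finite {a \<in> A. (\<lambda>k. \<sigma> k a) \<notin> ring_hom K (Rs a)}"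
proof -
  define B where "B = (\<Union>k \<in> carrier K. \<Union>l \<in> carrier K.
      {a \<in> A. \<sigma> (k \<oplus>\<^bsub>K\<^esub> l) a \<noteq> (\<sigma> k \<oplus>\<^bsub>prod_ring A Rs\<^esub> \<sigma> l) a} \<union>
      {a \<in> A. \<sigma> (k \<otimes>\<^bsub>K\<^esub> l) a \<noteq> (\<sigma> k \<otimes>\<^bsub>prod_ring A Rs\<^esub> \<sigma> l) a}) \<union>
      {a \<in> A. \<sigma> \<one>\<^bsub>K\<^esub> a \<noteq> \<one>\<^bsub>prod_ring A Rs\<^esub> a}"
  have "finite B"
    unfolding B_def using K_finite finite_section_defects[OF \<sigma>] finite_section_one_defect[OF \<sigma>]
    by (intro finite_UnI finite_UN_I) simp_all
  have "(\<lambda>k. \<sigma> k a) \<in> ring_hom K (Rs a)" if a: "a \<in> A" "a \<notin> B" for a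
  proof (rule ring_hom_memI)
    show "\<sigma> k a \<in> carrier (Rs a)" if "k \<in> carrier K" for k
      using \<sigma>[OF that] S_subset a(1) by (auto simp: prod_ring_simps)
  next
    fix k l assume "k \<in> carrier K" "l \<in> carrier K"
    then have "\<sigma> (k \<otimes>\<^bsub>K\<^esub> l) a = (\<sigma> k \<otimes>\<^bsub>prod_ring A Rs\<^esub> \<sigma> l) a"
      and "\<sigma> (k \<oplus>\<^bsub>K\<^esub> l) a = (\<sigma> k \<oplus>\<^bsub>prod_ring A Rs\<^esub> \<sigma> l) a"
      using a unfolding B_def by blast+
    with a(1) show "\<sigma> (k \<otimes>\<^bsub>K\<^esub> l) a = \<sigma> k a \<otimes>\<^bsub>Rs a\<^esub> \<sigma> l a"
      and "\<sigma> (k \<oplus>\<^bsub>K\<^esub> l) a = \<sigma> k a \<oplus>\<^bsub>Rs a\<^esub> \<sigma> l a"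
      by (simp_all add: prod_ring_simps)
  next
    have "\<sigma> \<one>\<^bsub>K\<^esub> a = \<one>\<^bsub>prod_ring A Rs\<^esub> a"
      using a unfolding B_def by blast
    with a(1) show "\<sigma> \<one>\<^bsub>K\<^esub> a = \<one>\<^bsub>Rs a\<^esub>"
      by (simp add: prod_ring_simps)
  qed
  then have "{a \<in> A. (\<lambda>k. \<sigma> k a) \<notin> ring_hom K (Rs a)} \<subseteq> B"
    by blast
  from this \<open>finite B\<close> show ?thesis
    by (rule finite_subset)
qed

lemma ex_ring_hom_section:
  assumes K_finite: "finite (carrier K)" and onto: "\<pi> ` S = carrier K"
    and fs: "\<And>a. a \<in> A \<Longrightarrow> fs a \<in> ring_hom K (Rs a)"
  shows "\<exists>\<nu> \<in> ring_hom K ((prod_ring A Rs)\<lparr>carrier := S\<rparr>). \<forall>k \<in> carrier K. \<pi> (\<nu> k) = k"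
proof -
  define \<sigma> where "\<sigma> = inv_into S \<pi>"
  have \<sigma>: "\<sigma> k \<in> S \<and> \<pi> (\<sigma> k) = k" if "k \<in> carrier K" for k
    unfolding \<sigma>_def using that onto inv_into_into f_inv_into_f by metis
  define F where "F = {a \<in> A. (\<lambda>k. \<sigma> k a) \<notin> ring_hom K (Rs a)}"
  have F_finite: "finite F"
    unfolding F_def using K_finite \<sigma> by (rule finite_non_hom_coordinates)
  define \<nu> where "\<nu> k = (\<lambda>a\<in>A. if a \<in> F then fs a k else \<sigma> k a)" for k
  have coords: "(\<lambda>k. \<nu> k a) \<in> ring_hom K (Rs a)" if a: "a \<in> A" for a
  proof (cases "a \<in> F")
    case True
    then have "(\<lambda>k. \<nu> k a) = fs a"
      using a by (simp add: \<nu>_def)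
    then show ?thesis
      using fs[OF a] by simp
  next
    case False
    then have "(\<lambda>k. \<nu> k a) = (\<lambda>k. \<sigma> k a)"
      using a by (simp add: \<nu>_def)
    then show ?thesis
      using False a by (simp add: F_def)
  qed
  have \<nu>_image: "\<nu> k \<in> S \<and> \<pi> (\<nu> k) = k" if k: "k \<in> carrier K" for k
  proof -
    have \<nu>_carrier: "\<nu> k \<in> carrier (prod_ring A Rs)"
      using ring_hom_closed[OF coords k] by (simp add: \<nu>_def prod_ring_simps)
    have "{a \<in> A. \<sigma> k a \<noteq> \<nu> k a} \<subseteq> F"
      by (auto simp: \<nu>_def)
    then have "finite {a \<in> A. \<sigma> k a \<noteq> \<nu> k a}"
      using F_finite by (rule finite_subset)
    then have "\<nu> k \<in> S \<and> \<pi> (\<nu> k) = \<pi> (\<sigma> k)"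
      using same_image_iff_finite_disagreement[OF conjunct1[OF \<sigma>[OF k]] \<nu>_carrier] by simp
    then show ?thesis
      using \<sigma>[OF k] by simp
  qed
  have "\<nu> \<in> ring_hom K ((prod_ring A Rs)\<lparr>carrier := S\<rparr>)"
    using ring_K coords _ S_subset
  proof (rule ring_hom_prod_ringI)
    show "\<nu> k \<in> S" if "k \<in> carrier K" for k
      using \<nu>_image[OF that] ..
  qed
  with \<nu>_image show ?thesis
    by blast
qed

end

theorem proposition4p7:
  fixes K :: "('k, 'c) ring_scheme"
    and A :: "'i set"
    and Rs :: "'i \<Rightarrow> ('r, 'b) ring_scheme"
    and fs :: "'i \<Rightarrow> 'k \<Rightarrow> 'r"
    and S :: "('i \<Rightarrow> 'r) set"
  assumes K_field: "field K" and K_finite: "finite (carrier K)"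
    and A_inf: "infinite A"
    and algs: "\<And>a. a \<in> A \<Longrightarrow> k_algebra K (Rs a) (fs a)"
    and S_sub: "subring S (prod_ring A Rs)"
    and I_sub: "dsum_set A Rs \<subseteq> S"
    and I_ideal: "ideal (dsum_set A Rs) ((prod_ring A Rs)\<lparr>carrier := S\<rparr>)"
    and iso: "((prod_ring A Rs)\<lparr>carrier := S\<rparr>) Quot (dsum_set A Rs) \<simeq> K"
  shows "\<exists>\<pi> \<nu>. \<pi> \<in> ring_hom ((prod_ring A Rs)\<lparr>carrier := S\<rparr>) K
             \<and> \<pi> ` S = carrier K
             \<and> a_kernel ((prod_ring A Rs)\<lparr>carrier := S\<rparr>) K \<pi> = dsum_set A Rs
             \<and> \<nu> \<in> ring_hom K ((prod_ring A Rs)\<lparr>carrier := S\<rparr>)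
             \<and> (\<forall>k \<in> carrier K. \<pi> (\<nu> k) = k)"
proof -
  let ?R = "(prod_ring A Rs)\<lparr>carrier := S\<rparr>" and ?I = "dsum_set A Rs"
  have K: "ring K"
    using K_field by (simp add: field_def domain_def cring_def)
  have R: "ring ?R"
    using I_ideal by (simp add: ideal_def)
  obtain h where h: "h \<in> ring_iso (?R Quot ?I) K"
    using iso unfolding is_ring_iso_def by blast
  define \<pi> where "\<pi> = h \<circ> (+>\<^bsub>?R\<^esub>) ?I"
  have \<pi>: "\<pi> \<in> ring_hom ?R K" "\<pi> ` S = carrier K" "a_kernel ?R K \<pi> = ?I"
    using quotient_iso_projection[OF I_ideal K h] by (simp_all add: \<pi>_def)
  interpret dsum_kernel_hom A Rs S K \<pi>
    using algs subringE(1)[OF S_sub] R K \<pi>(1,3)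
    by (intro dsum_kernel_hom.intro) (auto simp: k_algebra_def)
  have "fs a \<in> ring_hom K (Rs a)" if "a \<in> A" for a
    using algs[OF that] by (simp add: k_algebra_def)
  then obtain \<nu> where "\<nu> \<in> ring_hom K ?R" "\<forall>k \<in> carrier K. \<pi> (\<nu> k) = k"
    using ex_ring_hom_section[OF K_finite \<pi>(2)] by blast
  with \<pi> show ?thesis by blast
qed

end
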